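(* Let $\Sigma$ be a ranked alphabet, $B$ a strong bimonoid and $\mathcal{A}$ a $(\Sigma,B)$-wta. If $B$ is locally finite, or if $B$ is multiplicatively locally finite and $\mathcal{A}$ is bottom-up deterministic, then the Nerode $(\Sigma,B)$-algebra $\mathcal{N}(\mathcal{A})$ is finite and $[\![\mathcal{A}]\!]^{\mathrm{init}}=[\![\mathrm{rel}(\mathcal{N}(\mathcal{A}))]\!]^{\mathrm{init}}$.
   Context: Ranked alphabet $\Sigma$ ($\Sigma^{(0)}\ne\emptyset$), trees $T_\Sigma$; strong bimonoid $(B,\oplus,\otimes,\mathbb{0},\mathbb{1})$ (commutative monoid $(B,\oplus,\mathbb{0})$, monoid $(B,\otimes,\mathbb{1})$, $\mathbb{0}\ne\mathbb{1}$, $\mathbb{0}$ absorbing, no distributivity). $B$ is locally finite if every finite subset generates a finite subalgebra of $(B,\oplus,\otimes,\mathbb{0},\mathbb{1})$; multiplicatively locally finite if every finite subset generates a finite submonoid of $(B,\otimes,\mathbb{1})$. $(\Sigma,B)$-wta $\mathcal{A}=(Q,\delta,F)$: $Q$ finite nonempty, $\delta_k:Q^k\times\Sigma^{(k)}\times Q\to B$, $F:Q\to B$. Vector algebra $\mathrm{V}(\mathcal{A})=(B^Q,\delta_{\mathcal{A}})$, $\delta_{\mathcal{A}}(\sigma)(v_1,\dots,v_k)_q=\bigoplus_{p_1,\dots,p_k}\big(\bigotimes_{i=1}^k(v_i)_{p_i}\big)\otimes\delta_k(p_1\dots p_k,\sigma,q)$; $h_{\mathrm{V}(\mathcal{A})}$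 the unique homomorphism from $T_\Sigma$; $[\![\mathcal{A}]\!]^{\mathrm{init}}(\xi)=\bigoplus_q h_{\mathrm{V}(\mathcal{A})}(\xi)_q\otimes F_q$. Bottom-up deterministic: for all $k,\sigma,q_1,\dots,q_k$ at most one $q$ with $\delta_k(q_1\dots q_k,\sigma,q)\ne\mathbb{0}$. Crisp-deterministic: exactly one $q$ with value $\mathbb{1}$ and all others $\mathbb{0}$. Nerode algebra $\mathcal{N}(\mathcal{A})=(Q_{\mathcal{N}},\theta_{\mathcal{N}},F_{\mathcal{N}})$: smallest subalgebra of $\mathrm{V}(\mathcal{A})$ with $(F_{\mathcal{N}})_v=\bigoplus_q v_q\otimes F_q$; finite if $Q_{\mathcal{N}}$ finite. For finite $(\Sigma,B)$-algebra $(P,\theta,G)$, $\mathrm{rel}(P,\theta,G)=(P,\delta',G)$ with $\delta'_k(p_1\dots p_k,\sigma,p)=\mathbb{1}$ iff $\theta(\sigma)(p_1,\dots,p_k)=p$, else $\mathbb{0}$. *)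

theory Defs
  imports Main
begin

text \<open>Strong bimonoids are rendered by the type class combination
  comm_monoid_add (for (B,oplus,0)), monoid_mult (for (B,otimes,1)),
  mult_zero (0 absorbing) and zero_neq_one; no distributivity is assumed.\<close>

class strong_bimonoid = comm_monoid_add + monoid_mult + mult_zero + zero_neq_one

datatype 'f rtree = Node 'f "'f rtree list"

inductive_set trees :: "'f set \<Rightarrow> ('f \<Rightarrow> nat) \<Rightarrow> 'f rtree set"
  for \<Sigma> :: "'f set" and rk :: "'f \<Rightarrow> nat" where
  "\<sigma> \<in> \<Sigma> \<Longrightarrow> length ts = rk \<sigma> \<Longrightarrow> \<forall>t\<in>set ts. t \<in> trees \<Sigma> rk \<Longrightarrow> Node \<sigma> ts \<in> trees \<Sigma> rk"

definition ranked_alphabet :: "'f set \<Rightarrow> ('f \<Rightarrow> nat) \<Rightarrow> bool" where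
  "ranked_alphabet \<Sigma> rk \<longleftrightarrow> finite \<Sigma> \<and> (\<exists>\<sigma>\<in>\<Sigma>. rk \<sigma> = 0)"

inductive_set gen_subalg :: "'b::strong_bimonoid set \<Rightarrow> 'b set" for A where
  "a \<in> A \<Longrightarrow> a \<in> gen_subalg A"
| "0 \<in> gen_subalg A"
| "1 \<in> gen_subalg A"
| "a \<in> gen_subalg A \<Longrightarrow> b \<in> gen_subalg A \<Longrightarrow> a + b \<in> gen_subalg A"
| "a \<in> gen_subalg A \<Longrightarrow> b \<in> gen_subalg A \<Longrightarrow> a * b \<in> gen_subalg A"

inductive_set gen_submon :: "'b::strong_bimonoid set \<Rightarrow> 'b set" for A where
  "a \<in> A \<Longrightarrow> a \<in> gen_submon A"
| "1 \<in> gen_submon A"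
| "a \<in> gen_submon A \<Longrightarrow> b \<in> gen_submon A \<Longrightarrow> a * b \<in> gen_submon A"

definition locally_finite :: "'b::strong_bimonoid itself \<Rightarrow> bool" where
  "locally_finite _ \<longleftrightarrow> (\<forall>A::'b set. finite A \<longrightarrow> finite (gen_subalg A))"

definition mult_locally_finite :: "'b::strong_bimonoid itself \<Rightarrow> bool" where
  "mult_locally_finite _ \<longleftrightarrow> (\<forall>A::'b set. finite A \<longrightarrow> finite (gen_submon A))"

text \<open>A (Sigma,B)-wta is given by a finite nonempty state set Q, a transition
  weight function delta (delta ps sigma q, with length ps = rk sigma) and
  root weights F.  Vectors in B^Q are functions 'q => 'b that are 0 outside Q.\<close>

definition wta :: "'q set \<Rightarrow> bool" where
  "wta Q \<longleftrightarrow> finite Q \<and> Q \<noteq> {}"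

definition state_lists :: "'q set \<Rightarrow> nat \<Rightarrow> 'q list set" where
  "state_lists Q k = {ps. length ps = k \<and> set ps \<subseteq> Q}"

definition vec_op :: "'q set \<Rightarrow> ('q list \<Rightarrow> 'f \<Rightarrow> 'q \<Rightarrow> 'b::strong_bimonoid) \<Rightarrow> 'f
    \<Rightarrow> ('q \<Rightarrow> 'b) list \<Rightarrow> ('q \<Rightarrow> 'b)" where
  "vec_op Q \<delta> \<sigma> vs = (\<lambda>q. if q \<in> Q then
     (\<Sum>ps\<in>state_lists Q (length vs). prod_list (map2 (\<lambda>v p. v p) vs ps) * \<delta> ps \<sigma> q)
     else 0)"

primrec hV :: "'q set \<Rightarrow> ('q list \<Rightarrow> 'f \<Rightarrow> 'q \<Rightarrow> 'b::strong_bimonoid) \<Rightarrow> 'f rtree \<Rightarrow> ('q \<Rightarrow> 'b)" where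
  "hV Q \<delta> (Node \<sigma> ts) = vec_op Q \<delta> \<sigma> (map (hV Q \<delta>) ts)"

definition init_sem :: "'q set \<Rightarrow> ('q list \<Rightarrow> 'f \<Rightarrow> 'q \<Rightarrow> 'b::strong_bimonoid) \<Rightarrow> ('q \<Rightarrow> 'b)
    \<Rightarrow> 'f rtree \<Rightarrow> 'b" where
  "init_sem Q \<delta> F \<xi> = (\<Sum>q\<in>Q. hV Q \<delta> \<xi> q * F q)"

definition bu_deterministic :: "'f set \<Rightarrow> ('f \<Rightarrow> nat) \<Rightarrow> 'q set
    \<Rightarrow> ('q list \<Rightarrow> 'f \<Rightarrow> 'q \<Rightarrow> 'b::strong_bimonoid) \<Rightarrow> bool" where
  "bu_deterministic \<Sigma> rk Q \<delta> \<longleftrightarrow>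
     (\<forall>\<sigma>\<in>\<Sigma>. \<forall>qs\<in>state_lists Q (rk \<sigma>). \<forall>q\<in>Q. \<forall>q'\<in>Q.
        \<delta> qs \<sigma> q \<noteq> 0 \<longrightarrow> \<delta> qs \<sigma> q' \<noteq> 0 \<longrightarrow> q = q')"

text \<open>Nerode algebra: carrier = smallest subalgebra of V(A); operations are
  vec_op restricted; final weights nerode_final.\<close>
inductive_set nerode_states :: "'f set \<Rightarrow> ('f \<Rightarrow> nat) \<Rightarrow> 'q set
    \<Rightarrow> ('q list \<Rightarrow> 'f \<Rightarrow> 'q \<Rightarrow> 'b::strong_bimonoid) \<Rightarrow> ('q \<Rightarrow> 'b) set"
  for \<Sigma> rk Q \<delta> where
  "\<sigma> \<in> \<Sigma> \<Longrightarrow> length vs = rk \<sigma> \<Longrightarrow> \<forall>v\<in>set vs. v \<in> nerode_states \<Sigma> rk Q \<delta>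
     \<Longrightarrow> vec_op Q \<delta> \<sigma> vs \<in> nerode_states \<Sigma> rk Q \<delta>"

definition nerode_final :: "'q set \<Rightarrow> ('q \<Rightarrow> 'b::strong_bimonoid) \<Rightarrow> ('q \<Rightarrow> 'b) \<Rightarrow> 'b" where
  "nerode_final Q F v = (\<Sum>q\<in>Q. v q * F q)"

text \<open>rel(P,theta,G) = (P, delta', G): transition weights of the crisp automaton
  induced by the algebra operations theta.\<close>
definition rel_trans :: "('f \<Rightarrow> 'p list \<Rightarrow> 'p) \<Rightarrow> 'p list \<Rightarrow> 'f \<Rightarrow> 'p \<Rightarrow> 'b::strong_bimonoid" where
  "rel_trans \<theta> ps \<sigma> p = (if \<theta> \<sigma> ps = p then 1 else 0)"

end

theory Submission
  imports Defs
begin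

(* Every coordinate of a Nerode state is built from the finitely many transition weights of A.
   If B is locally finite, the coordinates therefore range over a finite subalgebra of B.  If A
   is bottom-up deterministic, every Nerode state has at most one nonzero coordinate, so the
   sums in the vector algebra have at most one nonzero summand and every coordinate is 0 or a
   product of transition weights; multiplicative local finiteness then suffices.  Either way
   the Nerode states are finitely many vectors over the finite set Q.  The crisp automaton
   rel(N(A)) reaches, on input xi, exactly the state h_V(A)(xi) with weight 1, so its
   semantics is F_N(h_V(A)(xi)), which is [[A]]^init(xi). *)

lemma finite_state_lists: "finite Q \<Longrightarrow> finite (state_lists Q k)"
  unfolding state_lists_def using finite_lists_length_eq[of Q k] by (simp add: conj_commute)

lemma sum_closed:
  assumes "(0::'a::comm_monoid_add) \<in> S" "\<And>a b. a \<in> S \<Longrightarrow> b \<in> S \<Longrightarrow> a + b \<in> S"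
    and "\<And>i. i \<in> I \<Longrightarrow> f i \<in> S"
  shows "sum f I \<in> S"
proof (cases "finite I")
  case True
  then show ?thesis using assms(3) by (induction I rule: finite_induct) (auto intro: assms(1,2))
qed (simp add: assms(1))

lemma prod_list_closed:
  assumes "(1::'a::monoid_mult) \<in> S" "\<And>a b. a \<in> S \<Longrightarrow> b \<in> S \<Longrightarrow> a * b \<in> S"
    and "set xs \<subseteq> S"
  shows "prod_list xs \<in> S"
  using assms(3) by (induction xs) (auto intro: assms(1,2))

lemma prod_list_eq_0_if_mem: "0 \<in> set xs \<Longrightarrow> prod_list xs = (0::'a::{monoid_mult,mult_zero})"
  by (induction xs) auto

lemma set_map2_apply_subset:
  "(\<And>v q. v \<in> set vs \<Longrightarrow> v q \<in> S) \<Longrightarrow> set (map2 (\<lambda>v p. v p) vs ps) \<subseteq> S"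
  by (auto dest: set_zip_leftD)

lemma prod_list_map2_apply_nonzero:
  assumes "prod_list (map2 (\<lambda>v p. v p) vs ps) \<noteq> (0::'a::{monoid_mult,mult_zero})"
    and "length ps = length vs" "i < length vs"
  shows "(vs ! i) (ps ! i) \<noteq> 0"
proof
  have "(vs ! i) (ps ! i) = map2 (\<lambda>v p. v p) vs ps ! i"
    using assms(2,3) by simp
  also have "\<dots> \<in> set (map2 (\<lambda>v p. v p) vs ps)"
    using assms(2,3) by (intro nth_mem) simp
  finally show "(vs ! i) (ps ! i) = 0 \<Longrightarrow> False"
    using assms(1) prod_list_eq_0_if_mem by metis
qed

lemma prod_list_map2_apply_indicator:
  "length ps = length us \<Longrightarrow>
   prod_list (map2 (\<lambda>v p. v p) (map (\<lambda>u p. if p = u then 1 else 0) us) ps) =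
     (if ps = us then 1 else (0::'a::{monoid_mult,mult_zero}))"
proof (induction us arbitrary: ps)
  case (Cons u us)
  then show ?case by (cases ps) auto
qed simp

definition single_support :: "('q \<Rightarrow> 'b::zero) \<Rightarrow> bool" where
  "single_support v \<longleftrightarrow> (\<forall>q q'. v q \<noteq> 0 \<longrightarrow> v q' \<noteq> 0 \<longrightarrow> q = q')"

lemma prod_list_map2_apply_nonzero_unique:
  assumes "\<forall>v\<in>set vs. single_support v"
    and "length ps = length vs" "length ps' = length vs"
    and "prod_list (map2 (\<lambda>v p. v p) vs ps) \<noteq> (0::'b::{monoid_mult,mult_zero})"
    and "prod_list (map2 (\<lambda>v p. v p) vs ps') \<noteq> 0"
  shows "ps = ps'"
proof (rule nth_equalityI)
  show "length ps = length ps'" using assms(2,3) by simp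
  fix i assume "i < length ps"
  then have i: "i < length vs" using assms(2) by simp
  have "(vs ! i) (ps ! i) \<noteq> 0" "(vs ! i) (ps' ! i) \<noteq> 0"
    using prod_list_map2_apply_nonzero assms(2-5) i by blast+
  moreover have "single_support (vs ! i)" using assms(1) i by simp
  ultimately show "ps ! i = ps' ! i" unfolding single_support_def by blast
qed

lemma vec_op_single_summand:
  assumes "finite Q" "\<forall>v\<in>set vs. single_support v" "vec_op Q \<delta> \<sigma> vs q \<noteq> 0"
  obtains ps where "q \<in> Q" "ps \<in> state_lists Q (length vs)"
    and "prod_list (map2 (\<lambda>v p. v p) vs ps) \<noteq> 0" "\<delta> ps \<sigma> q \<noteq> 0"
    and "vec_op Q \<delta> \<sigma> vs q = prod_list (map2 (\<lambda>v p. v p) vs ps) * \<delta> ps \<sigma> q"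
proof -
  let ?L = "state_lists Q (length vs)"
  let ?t = "\<lambda>ps. prod_list (map2 (\<lambda>v p. v p) vs ps) * \<delta> ps \<sigma> q"
  have q: "q \<in> Q" using assms(3) by (auto simp: vec_op_def split: if_split_asm)
  then have "sum ?t ?L \<noteq> 0" using assms(3) by (simp add: vec_op_def)
  then obtain ps where ps: "ps \<in> ?L" "?t ps \<noteq> 0"
    by (rule sum.not_neutral_contains_not_neutral)
  have unique: "ps' = ps" if "ps' \<in> ?L" "?t ps' \<noteq> 0" for ps'
  proof (rule prod_list_map2_apply_nonzero_unique[OF assms(2)])
    show "prod_list (map2 (\<lambda>v p. v p) vs ps') \<noteq> 0" "prod_list (map2 (\<lambda>v p. v p) vs ps) \<noteq> 0"
      using that(2) ps(2) by auto
  qed (use that(1) ps(1) in \<open>simp_all add: state_lists_def\<close>)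
  have "sum ?t ?L = sum ?t {ps}"
    by (rule sum.mono_neutral_right[OF finite_state_lists[OF assms(1)]]) (use ps(1) unique in blast)+
  then have "vec_op Q \<delta> \<sigma> vs q = ?t ps" using q by (simp add: vec_op_def)
  moreover have "prod_list (map2 (\<lambda>v p. v p) vs ps) \<noteq> 0" "\<delta> ps \<sigma> q \<noteq> 0"
    using ps(2) by auto
  ultimately show thesis using that q ps(1) by blast
qed

definition transition_weights :: "'f set \<Rightarrow> ('f \<Rightarrow> nat) \<Rightarrow> 'q set
    \<Rightarrow> ('q list \<Rightarrow> 'f \<Rightarrow> 'q \<Rightarrow> 'b) \<Rightarrow> 'b set" where
  "transition_weights \<Sigma> rk Q \<delta> =
     {\<delta> ps \<sigma> q | \<sigma> ps q. \<sigma> \<in> \<Sigma> \<and> ps \<in> state_lists Q (rk \<sigma>) \<and> q \<in> Q}"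

lemma finite_transition_weights:
  assumes "finite \<Sigma>" "finite Q"
  shows "finite (transition_weights \<Sigma> rk Q \<delta>)"
proof -
  have "transition_weights \<Sigma> rk Q \<delta> =
      (\<lambda>(\<sigma>, ps, q). \<delta> ps \<sigma> q) ` (SIGMA \<sigma>:\<Sigma>. state_lists Q (rk \<sigma>) \<times> Q)"
    unfolding transition_weights_def by force
  then show ?thesis
    using assms by (simp add: finite_state_lists)
qed

lemma finite_nerode_states_if_coordinates_in:
  assumes "finite Q" "finite S"
    and "\<And>v q. v \<in> nerode_states \<Sigma> rk Q \<delta> \<Longrightarrow> q \<in> Q \<Longrightarrow> v q \<in> S"
  shows "finite (nerode_states \<Sigma> rk Q \<delta>)"
proof (rule finite_subset)
  show "nerode_states \<Sigma> rk Q \<delta> \<subseteq> {v. \<forall>q. (q \<in> Q \<longrightarrow> v q \<in> S) \<and> (q \<notin> Q \<longrightarrow> v q = 0)}"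
    using assms(3) by (auto elim: nerode_states.cases simp: vec_op_def)
qed (rule finite_set_of_finite_funs[OF assms(1,2)])

lemma nerode_states_in_gen_subalg:
  "v \<in> nerode_states \<Sigma> rk Q \<delta> \<Longrightarrow> v q \<in> gen_subalg (transition_weights \<Sigma> rk Q \<delta>)"
proof (induction arbitrary: q rule: nerode_states.induct)
  case (1 \<sigma> vs)
  let ?S = "gen_subalg (transition_weights \<Sigma> rk Q \<delta>)"
  have summand: "prod_list (map2 (\<lambda>v p. v p) vs ps) * \<delta> ps \<sigma> q \<in> ?S"
    if "ps \<in> state_lists Q (length vs)" "q \<in> Q" for ps
  proof (rule gen_subalg.intros(5))
    show "prod_list (map2 (\<lambda>v p. v p) vs ps) \<in> ?S"
      by (intro prod_list_closed[OF gen_subalg.intros(3) gen_subalg.intros(5)]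
          set_map2_apply_subset) (use 1 in auto)
    show "\<delta> ps \<sigma> q \<in> ?S"
      using 1 that by (auto simp: transition_weights_def intro!: gen_subalg.intros(1))
  qed
  show ?case
  proof (cases "q \<in> Q")
    case True
    then show ?thesis unfolding vec_op_def
      by (simp add: sum_closed[OF gen_subalg.intros(2) gen_subalg.intros(4)] summand)
  qed (simp add: vec_op_def gen_subalg.intros(2))
qed

lemma finite_nerode_states_locally_finite:
  fixes \<delta> :: "'q list \<Rightarrow> 'f \<Rightarrow> 'q \<Rightarrow> 'b::strong_bimonoid"
  assumes "finite \<Sigma>" "finite Q" "locally_finite TYPE('b)"
  shows "finite (nerode_states \<Sigma> rk Q \<delta>)"
proof (rule finite_nerode_states_if_coordinates_in[OF assms(2)])
  show "finite (gen_subalg (transition_weights \<Sigma> rk Q \<delta>))"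
    using assms(3) finite_transition_weights[OF assms(1,2)] unfolding locally_finite_def by blast
qed (rule nerode_states_in_gen_subalg)

lemma bu_deterministicD:
  assumes "bu_deterministic \<Sigma> rk Q \<delta>" "\<sigma> \<in> \<Sigma>" "qs \<in> state_lists Q (rk \<sigma>)"
    and "q \<in> Q" "q' \<in> Q" "\<delta> qs \<sigma> q \<noteq> 0" "\<delta> qs \<sigma> q' \<noteq> 0"
  shows "q = q'"
  using assms unfolding bu_deterministic_def by blast

lemma nerode_states_single_support:
  assumes "bu_deterministic \<Sigma> rk Q \<delta>" "finite Q" "v \<in> nerode_states \<Sigma> rk Q \<delta>"
  shows "single_support v"
  using assms(3)
proof (induction rule: nerode_states.induct)
  case (1 \<sigma> vs)
  then have inputs: "\<forall>v\<in>set vs. single_support v" by blast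
  show ?case unfolding single_support_def
  proof (intro allI impI)
    fix q q' assume nonzero: "vec_op Q \<delta> \<sigma> vs q \<noteq> 0" "vec_op Q \<delta> \<sigma> vs q' \<noteq> 0"
    obtain ps where ps: "q \<in> Q" "ps \<in> state_lists Q (length vs)"
      "prod_list (map2 (\<lambda>v p. v p) vs ps) \<noteq> 0" "\<delta> ps \<sigma> q \<noteq> 0"
      using vec_op_single_summand[OF assms(2) inputs nonzero(1)] by blast
    obtain ps' where ps': "q' \<in> Q" "ps' \<in> state_lists Q (length vs)"
      "prod_list (map2 (\<lambda>v p. v p) vs ps') \<noteq> 0" "\<delta> ps' \<sigma> q' \<noteq> 0"
      using vec_op_single_summand[OF assms(2) inputs nonzero(2)] by blast
    have "ps = ps'"
      by (rule prod_list_map2_apply_nonzero_unique[OF inputs _ _ ps(3) ps'(3)])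
        (use ps(2) ps'(2) in \<open>simp_all add: state_lists_def\<close>)
    then show "q = q'"
      using bu_deterministicD[OF assms(1) 1(1)] ps ps' 1(2) by simp
  qed
qed

lemma nerode_states_in_gen_submon:
  assumes "bu_deterministic \<Sigma> rk Q \<delta>" "finite Q" "v \<in> nerode_states \<Sigma> rk Q \<delta>"
  shows "v q \<in> insert 0 (gen_submon (transition_weights \<Sigma> rk Q \<delta>))"
  using assms(3)
proof (induction arbitrary: q rule: nerode_states.induct)
  case (1 \<sigma> vs)
  let ?S = "insert 0 (gen_submon (transition_weights \<Sigma> rk Q \<delta>))"
  have mult_closed: "a * b \<in> ?S" if "a \<in> ?S" "b \<in> ?S" for a b
    using that by (auto intro: gen_submon.intros)
  show ?case
  proof (cases "vec_op Q \<delta> \<sigma> vs q = 0")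
    case False
    have "\<forall>v\<in>set vs. single_support v"
      using 1 nerode_states_single_support[OF assms(1,2)] by blast
    then obtain ps where ps: "q \<in> Q" "ps \<in> state_lists Q (length vs)"
      "vec_op Q \<delta> \<sigma> vs q = prod_list (map2 (\<lambda>v p. v p) vs ps) * \<delta> ps \<sigma> q"
      using vec_op_single_summand[OF assms(2) _ False] by blast
    have "prod_list (map2 (\<lambda>v p. v p) vs ps) \<in> ?S"
      by (intro prod_list_closed[OF _ mult_closed] set_map2_apply_subset)
        (use 1 in \<open>auto intro: gen_submon.intros(2)\<close>)
    moreover have "\<delta> ps \<sigma> q \<in> ?S"
      using 1 ps by (auto simp: transition_weights_def intro!: gen_submon.intros(1))
    ultimately show ?thesis using ps(3) mult_closed by simp
  qed simp
qed

lemma finite_nerode_states_bu_deterministic: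
  fixes \<delta> :: "'q list \<Rightarrow> 'f \<Rightarrow> 'q \<Rightarrow> 'b::strong_bimonoid"
  assumes "finite \<Sigma>" "finite Q" "mult_locally_finite TYPE('b)" "bu_deterministic \<Sigma> rk Q \<delta>"
  shows "finite (nerode_states \<Sigma> rk Q \<delta>)"
proof (rule finite_nerode_states_if_coordinates_in[OF assms(2)])
  show "finite (insert 0 (gen_submon (transition_weights \<Sigma> rk Q \<delta>)))"
    using assms(3) finite_transition_weights[OF assms(1,2)] unfolding mult_locally_finite_def by blast
qed (rule nerode_states_in_gen_submon[OF assms(4,2)])

primrec tree_eval :: "('f \<Rightarrow> 'p list \<Rightarrow> 'p) \<Rightarrow> 'f rtree \<Rightarrow> 'p" where
  "tree_eval \<theta> (Node \<sigma> ts) = \<theta> \<sigma> (map (tree_eval \<theta>) ts)"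

lemma hV_eq_tree_eval: "hV Q \<delta> \<xi> = tree_eval (vec_op Q \<delta>) \<xi>"
  by (induction \<xi>) (simp cong: map_cong)

lemma tree_eval_in_nerode_states:
  "\<xi> \<in> trees \<Sigma> rk \<Longrightarrow> tree_eval (vec_op Q \<delta>) \<xi> \<in> nerode_states \<Sigma> rk Q \<delta>"
  by (induction rule: trees.induct) (auto intro!: nerode_states.intros)

lemma hV_rel_trans:
  assumes "finite P" "\<And>\<xi>. \<xi> \<in> trees \<Sigma> rk \<Longrightarrow> tree_eval \<theta> \<xi> \<in> P" "\<xi> \<in> trees \<Sigma> rk"
  shows "hV P (rel_trans \<theta>) \<xi> = (\<lambda>p. if p = tree_eval \<theta> \<xi> then 1 else (0::'b::strong_bimonoid))"
  using assms(3)
proof (induction rule: trees.induct)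
  case (1 \<sigma> ts)
  \<comment> \<open>rel_trans is polymorphic in its weight type, which has to be fixed explicitly here\<close>
  let ?d = "rel_trans \<theta> :: _ \<Rightarrow> _ \<Rightarrow> _ \<Rightarrow> 'b"
  let ?us = "map (tree_eval \<theta>) ts"
  have us: "?us \<in> state_lists P (length ts)"
    using 1 assms(2) by (auto simp: state_lists_def)
  have node: "Node \<sigma> ts \<in> trees \<Sigma> rk"
    using 1 by (blast intro: trees.intros)
  have "hV P ?d (Node \<sigma> ts) p = (if p = \<theta> \<sigma> ?us then 1 else 0)" for p
  proof -
    have "map (hV P ?d) ts = map (\<lambda>u p. if p = u then 1 else 0) ?us"
      unfolding map_map comp_def by (rule map_cong[OF refl]) (use 1(3) in blast)
    then have "hV P ?d (Node \<sigma> ts) p = vec_op P ?d \<sigma> (map (\<lambda>u p. if p = u then 1 else 0) ?us) p"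
      by (simp only: hV.simps)
    also have "\<dots> = (if p \<in> P then \<Sum>ps\<in>state_lists P (length ts). if ?us = ps then ?d ps \<sigma> p else 0
       else 0)"
      unfolding vec_op_def
      by (intro if_cong sum.cong refl)
        (auto simp del: map_map simp: prod_list_map2_apply_indicator state_lists_def)
    also have "\<dots> = (if p = \<theta> \<sigma> ?us then 1 else 0)"
      using assms(2)[OF node] us finite_state_lists[OF assms(1)]
      by (auto simp: rel_trans_def)
    finally show ?thesis .
  qed
  then show ?case by auto
qed

lemma init_sem_rel_trans:
  assumes "finite P" "\<And>\<xi>. \<xi> \<in> trees \<Sigma> rk \<Longrightarrow> tree_eval \<theta> \<xi> \<in> P" "\<xi> \<in> trees \<Sigma> rk"
  shows "init_sem P (rel_trans \<theta>) G \<xi> = (G (tree_eval \<theta> \<xi>) :: 'b::strong_bimonoid)"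
proof -
  have "init_sem P (rel_trans \<theta>) G \<xi> = (\<Sum>p\<in>P. (if p = tree_eval \<theta> \<xi> then 1 else 0) * G p)"
    using hV_rel_trans[OF assms, where 'b = 'b] by (simp add: init_sem_def)
  also have "\<dots> = (\<Sum>p\<in>P. if tree_eval \<theta> \<xi> = p then G p else 0)"
    by (intro sum.cong) auto
  also have "\<dots> = G (tree_eval \<theta> \<xi>)"
    using assms by simp
  finally show ?thesis .
qed

theorem corollary6p10:
  fixes \<Sigma> :: "'f set" and rk :: "'f \<Rightarrow> nat"
    and Q :: "'q set" and \<delta> :: "'q list \<Rightarrow> 'f \<Rightarrow> 'q \<Rightarrow> 'b::strong_bimonoid" and F :: "'q \<Rightarrow> 'b"
  assumes "ranked_alphabet \<Sigma> rk"
    and "wta Q"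
    and "locally_finite TYPE('b) \<or> (mult_locally_finite TYPE('b) \<and> bu_deterministic \<Sigma> rk Q \<delta>)"
  shows "finite (nerode_states \<Sigma> rk Q \<delta>) \<and>
    (\<forall>\<xi>\<in>trees \<Sigma> rk. init_sem Q \<delta> F \<xi> =
       init_sem (nerode_states \<Sigma> rk Q \<delta>) (rel_trans (vec_op Q \<delta>)) (nerode_final Q F) \<xi>)"
proof -
  have finite_alphabet_states: "finite \<Sigma>" "finite Q"
    using assms(1,2) by (simp_all add: ranked_alphabet_def wta_def)
  from assms(3) have fin: "finite (nerode_states \<Sigma> rk Q \<delta>)"
    by (elim disjE conjE) (simp_all add: finite_nerode_states_locally_finite
        finite_nerode_states_bu_deterministic finite_alphabet_states)
  have "init_sem Q \<delta> F \<xi> =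
      init_sem (nerode_states \<Sigma> rk Q \<delta>) (rel_trans (vec_op Q \<delta>)) (nerode_final Q F) \<xi>"
    if "\<xi> \<in> trees \<Sigma> rk" for \<xi>
  proof -
    have "init_sem Q \<delta> F \<xi> = nerode_final Q F (tree_eval (vec_op Q \<delta>) \<xi>)"
      by (simp add: nerode_final_def init_sem_def hV_eq_tree_eval)
    also have "\<dots> =
        init_sem (nerode_states \<Sigma> rk Q \<delta>) (rel_trans (vec_op Q \<delta>)) (nerode_final Q F) \<xi>"
      by (rule init_sem_rel_trans[OF fin, symmetric]) (use tree_eval_in_nerode_states that in blast)+
    finally show ?thesis .
  qed
  with fin show ?thesis by blast
qed

end
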